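(* For all flow graphs $h_1,h_2$ over a flow monoid $\mathbb{M}$ with $h_1\#\#h_2$, one has $h_1.\mathit{flow}\uplus h_2.\mathit{flow}\ \ge\ (h_1\uplus h_2).\mathit{flow}$ pointwise on $X_1\uplus X_2$.
   Context: A flow monoid is a commutative monoid $(\mathbb{M},+,0)$ such that $n\le m :\iff \exists o.\ m=n+o$ is a partial order in which every ascending chain $K$ has a least upper bound $\bigsqcup K$, and $n+\bigsqcup K=\bigsqcup(n+K)$. $\mathcal{C}(\mathbb{M}\to\mathbb{M})$ is the set of functions commuting with least upper bounds of ascending chains. Infinite sums denote least upper bounds of finite partial sums. A flow graph is $h=(X,E,\mathit{in})$ with $X\subseteq\mathbb{N}$ finite, $E:X\times\mathbb{N}\to\mathcal{C}(\mathbb{M}\to\mathbb{M})$, $\mathit{in}:(\mathbb{N}\setminus X)\times X\to\mathbb{M}$; $\mathit{in}_x=\sum_{y\in\mathbb{N}\setminus X}\mathit{in}(y,x)$; the flow $h.\mathit{flow}$ is the least $\mathit{flow}:X\to\mathbb{M}$ with $\mathit{flow}(x)=\mathit{in}_x+\sum_{y\in X}E(y,x)(\mathit{flow}(y))$; the outflow is $h.\mathit{out}(x,y)=E(x,y)(h.\mathit{flow}(x))$ for $x\in X$, $y\notin X$. For $h_i=(X_i,E_i,\mathit{in}_i)$: $h_1\#\#h_2$ iff $X_1\cap X_2=\emptyset$ and for all $x\in X_1,y\in X_2$, $h_1.\mathit{out}(x,y)=\mathit{in}_2(x,y)$ and $h_2.\mathit{out}(y,x)=\mathit{in}_1(y,x)$;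 and $h_1\uplus h_2=(X_1\uplus X_2,E_1\uplus E_2,(\mathit{in}_1\uplus\mathit{in}_2)|_{(\mathbb{N}\setminus(X_1\uplus X_2))\times(X_1\uplus X_2)})$. *)

theory Defs
  imports Main
begin

definition leM :: "'m::comm_monoid_add \<Rightarrow> 'm \<Rightarrow> bool" where
  "leM n m \<longleftrightarrow> (\<exists>d. m = n + d)"

definition is_lubM :: "'m::comm_monoid_add set \<Rightarrow> 'm \<Rightarrow> bool" where
  "is_lubM K u \<longleftrightarrow> (\<forall>k\<in>K. leM k u) \<and> (\<forall>v. (\<forall>k\<in>K. leM k v) \<longrightarrow> leM u v)"

definition lubM :: "'m::comm_monoid_add set \<Rightarrow> 'm" where
  "lubM K = (THE u. is_lubM K u)"

definition chainM :: "'m::comm_monoid_add set \<Rightarrow> bool" where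
  "chainM K \<longleftrightarrow> K \<noteq> {} \<and> (\<forall>a\<in>K. \<forall>b\<in>K. leM a b \<or> leM b a)"

definition flow_monoid :: "'m::comm_monoid_add itself \<Rightarrow> bool" where
  "flow_monoid _ \<longleftrightarrow>
     (\<forall>a b::'m. leM a b \<longrightarrow> leM b a \<longrightarrow> a = b) \<and>
     (\<forall>K::'m set. chainM K \<longrightarrow> (\<exists>u. is_lubM K u)) \<and>
     (\<forall>(n::'m) K. chainM K \<longrightarrow> n + lubM K = lubM ((\<lambda>k. n + k) ` K))"

definition continuousM :: "('m::comm_monoid_add \<Rightarrow> 'm) \<Rightarrow> bool" where
  "continuousM f \<longleftrightarrow> (\<forall>K. chainM K \<longrightarrow> is_lubM (f ` K) (f (lubM K)))"

definition infsumM :: "(nat \<Rightarrow> 'm::comm_monoid_add) \<Rightarrow> nat set \<Rightarrow> 'm" where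
  "infsumM f A = lubM (range (\<lambda>n. sum f (A \<inter> {..<n})))"

record 'm fgraph =
  nodes :: "nat set"
  edge  :: "nat \<Rightarrow> nat \<Rightarrow> 'm \<Rightarrow> 'm"
  inflow :: "nat \<Rightarrow> nat \<Rightarrow> 'm"

definition flow_graph :: "('m::comm_monoid_add) fgraph \<Rightarrow> bool" where
  "flow_graph h \<longleftrightarrow> finite (nodes h) \<and>
     (\<forall>x\<in>nodes h. \<forall>y. continuousM (edge h x y))"

definition in_node :: "('m::comm_monoid_add) fgraph \<Rightarrow> nat \<Rightarrow> 'm" where
  "in_node h x = infsumM (\<lambda>y. inflow h y x) (- nodes h)"

definition is_flow_sol :: "('m::comm_monoid_add) fgraph \<Rightarrow> (nat \<Rightarrow> 'm) \<Rightarrow> bool" where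
  "is_flow_sol h fl \<longleftrightarrow> (\<forall>x\<in>nodes h.
      fl x = in_node h x + (\<Sum>y\<in>nodes h. edge h y x (fl y)))"

definition is_least_flow :: "('m::comm_monoid_add) fgraph \<Rightarrow> (nat \<Rightarrow> 'm) \<Rightarrow> bool" where
  "is_least_flow h fl \<longleftrightarrow> is_flow_sol h fl \<and> (\<forall>x. x \<notin> nodes h \<longrightarrow> fl x = 0) \<and>
     (\<forall>fl'. is_flow_sol h fl' \<longrightarrow> (\<forall>x\<in>nodes h. leM (fl x) (fl' x)))"

definition flow :: "('m::comm_monoid_add) fgraph \<Rightarrow> nat \<Rightarrow> 'm" where
  "flow h = (THE fl. is_least_flow h fl)"

definition outflow :: "('m::comm_monoid_add) fgraph \<Rightarrow> nat \<Rightarrow> nat \<Rightarrow> 'm" where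
  "outflow h x y = edge h x y (flow h x)"

definition compatible :: "('m::comm_monoid_add) fgraph \<Rightarrow> 'm fgraph \<Rightarrow> bool" (infix "##" 50) where
  "h1 ## h2 \<longleftrightarrow> nodes h1 \<inter> nodes h2 = {} \<and>
     (\<forall>x\<in>nodes h1. \<forall>y\<in>nodes h2. outflow h1 x y = inflow h2 x y \<and> outflow h2 y x = inflow h1 y x)"

definition fg_union :: "('m::comm_monoid_add) fgraph \<Rightarrow> 'm fgraph \<Rightarrow> 'm fgraph" (infixl "\<uplus>\<^sub>f" 65) where
  "h1 \<uplus>\<^sub>f h2 = \<lparr> nodes = nodes h1 \<union> nodes h2,
     edge = (\<lambda>x y. if x \<in> nodes h1 then edge h1 x y else edge h2 x y),
     inflow = (\<lambda>y x. if y \<notin> nodes h1 \<union> nodes h2 \<and> x \<in> nodes h1 then inflow h1 y x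
                     else if y \<notin> nodes h1 \<union> nodes h2 \<and> x \<in> nodes h2 then inflow h2 y x
                     else 0) \<rparr>"

definition fun_union :: "nat set \<Rightarrow> (nat \<Rightarrow> 'm) \<Rightarrow> (nat \<Rightarrow> 'm) \<Rightarrow> nat \<Rightarrow> 'm" where
  "fun_union X1 f1 f2 = (\<lambda>x. if x \<in> X1 then f1 x else f2 x)"

end

theory Submission
  imports Defs
begin

text \<open>The flow of a flow graph is the least fixed point of a continuous operator on
  node-wise values, so it is the supremum of the Kleene iterates from 0.
  Given compatible h1 and h2, the union of their flows solves the flow equation of
  h1 \<uplus> h2: at a node x of h1, the part of the inflow of h1 at x that comes from h2
  is, by compatibility, exactly the edge contribution of h2's flow to x, which in
  h1 \<uplus> h2 is produced internally. Being the least solution, the flow of h1 \<uplus> h2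
  lies below this union.\<close>

section \<open>The natural order and ascending sequences\<close>

lemma leM_refl: "leM a a"
  unfolding leM_def by (metis add.right_neutral)

lemma leM_trans [trans]: "leM a b \<Longrightarrow> leM b c \<Longrightarrow> leM a c"
  unfolding leM_def by (metis add.assoc)

lemma leM_zero: "leM 0 a"
  unfolding leM_def by simp

lemma leM_add_mono: "leM a b \<Longrightarrow> leM c d \<Longrightarrow> leM (a + c) (b + (d::'m::comm_monoid_add))"
  unfolding leM_def by (metis add.assoc add.commute)

lemma leM_sum_mono:
  "(\<And>y. y \<in> S \<Longrightarrow> leM (f y) (g y)) \<Longrightarrow> leM (\<Sum>y\<in>S. f y) (\<Sum>y\<in>S. g y)"
proof (induction S rule: infinite_finite_induct)
  case (insert a F)
  then show ?case by (simp add: leM_add_mono)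
qed (simp_all add: leM_refl)

definition incseqM :: "(nat \<Rightarrow> 'm::comm_monoid_add) \<Rightarrow> bool" where
  "incseqM s \<longleftrightarrow> (\<forall>n. leM (s n) (s (Suc n)))"

lemma incseqM_leM: assumes "incseqM s" "m \<le> n" shows "leM (s m) (s n)"
  using assms(2)
proof (induction n rule: dec_induct)
  case (step n)
  then show ?case using assms(1) leM_trans unfolding incseqM_def by blast
qed (rule leM_refl)

lemma incseqM_const: "incseqM (\<lambda>n. c)"
  unfolding incseqM_def by (simp add: leM_refl)

lemma incseqM_add: "incseqM a \<Longrightarrow> incseqM b \<Longrightarrow> incseqM (\<lambda>n. a n + b n)"
  unfolding incseqM_def using leM_add_mono by blast

lemma incseqM_sum: "(\<And>y. y \<in> S \<Longrightarrow> incseqM (f y)) \<Longrightarrow> incseqM (\<lambda>n. \<Sum>y\<in>S. f y n)"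
  unfolding incseqM_def by (simp add: leM_sum_mono)

lemma chainM_range_incseqM: assumes "incseqM s" shows "chainM (range s)"
  unfolding chainM_def
proof (intro conjI ballI)
  fix a b assume "a \<in> range s" "b \<in> range s"
  then obtain m n where "a = s m" "b = s n" by auto
  then show "leM a b \<or> leM b a"
    using incseqM_leM[OF assms] by (cases "m \<le> n") auto
qed simp

lemma incseqM_partial_sums: "incseqM (\<lambda>n. sum g (A \<inter> {..<n}))"
  unfolding incseqM_def
proof
  fix n
  show "leM (sum g (A \<inter> {..<n})) (sum g (A \<inter> {..<Suc n}))"
  proof (cases "n \<in> A")
    case True
    then have "A \<inter> {..<Suc n} = insert n (A \<inter> {..<n})" by auto
    then show ?thesis unfolding leM_def by (auto simp: add.commute)
  next
    case False
    then have "A \<inter> {..<Suc n} = A \<inter> {..<n}" by (auto simp: less_Suc_eq)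
    then show ?thesis by (simp add: leM_refl)
  qed
qed

section \<open>Least upper bounds in a flow monoid\<close>

context
  assumes flow_monoid: "flow_monoid TYPE('m::comm_monoid_add)"
begin

lemma leM_antisym: "leM (a::'m) b \<Longrightarrow> leM b a \<Longrightarrow> a = b"
  using flow_monoid unfolding flow_monoid_def by blast

lemma lubM_eqI: "is_lubM K (u::'m) \<Longrightarrow> lubM K = u"
  unfolding lubM_def
  by (rule the_equality) (use leM_antisym in \<open>auto simp: is_lubM_def\<close>)

lemma is_lubM_lubM: "chainM (K::'m set) \<Longrightarrow> is_lubM K (lubM K)"
  using flow_monoid lubM_eqI unfolding flow_monoid_def by metis

lemma add_lubM: "chainM (K::'m set) \<Longrightarrow> c + lubM K = lubM ((\<lambda>k. c + k) ` K)"
  using flow_monoid unfolding flow_monoid_def by blast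

lemma leM_lubM_incseqM: "incseqM (s::nat \<Rightarrow> 'm) \<Longrightarrow> leM (s n) (lubM (range s))"
  using is_lubM_lubM[OF chainM_range_incseqM] unfolding is_lubM_def by blast

lemma lubM_incseqM_leM:
  "incseqM (s::nat \<Rightarrow> 'm) \<Longrightarrow> (\<And>n. leM (s n) v) \<Longrightarrow> leM (lubM (range s)) v"
  using is_lubM_lubM[OF chainM_range_incseqM] unfolding is_lubM_def by blast

lemma lubM_const: "lubM (range (\<lambda>n. c::'m)) = c"
  by (rule lubM_eqI) (auto simp: is_lubM_def leM_refl)

lemma add_lubM_incseqM:
  "incseqM (s::nat \<Rightarrow> 'm) \<Longrightarrow> c + lubM (range s) = lubM (range (\<lambda>n. c + s n))"
  using add_lubM[OF chainM_range_incseqM] by (simp add: image_image)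

lemma lubM_add:
  assumes a: "incseqM (a::nat \<Rightarrow> 'm)" and b: "incseqM b"
  shows "lubM (range (\<lambda>n. a n + b n)) = lubM (range a) + lubM (range b)"
proof (rule lubM_eqI, unfold is_lubM_def, safe)
  fix n show "leM (a n + b n) (lubM (range a) + lubM (range b))"
    using leM_add_mono leM_lubM_incseqM a b by blast
next
  fix v assume v: "\<forall>k\<in>range (\<lambda>n. a n + b n). leM k v"
  have diagonal: "leM (a n + b m) v" for m n
  proof -
    have "leM (a n + b m) (a (max m n) + b (max m n))"
      using leM_add_mono incseqM_leM a b by (metis max.cobounded1 max.cobounded2)
    with v show ?thesis using leM_trans by blast
  qed
  have "leM (lubM (range a) + b m) v" for m
  proof -
    have "lubM (range a) + b m = lubM (range (\<lambda>n. b m + a n))"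
      using add_lubM_incseqM[OF a, of "b m"] by (simp add: add.commute)
    also have "leM \<dots> v"
      by (rule lubM_incseqM_leM[OF incseqM_add[OF incseqM_const a]]) (subst add.commute, rule diagonal)
    finally show ?thesis .
  qed
  then have "leM (lubM (range (\<lambda>m. lubM (range a) + b m))) v"
    using lubM_incseqM_leM[OF incseqM_add[OF incseqM_const b]] by blast
  then show "leM (lubM (range a) + lubM (range b)) v"
    using add_lubM_incseqM[OF b] by simp
qed

lemma lubM_sum:
  assumes "finite S" "\<And>y. y \<in> S \<Longrightarrow> incseqM (f y)"
  shows "lubM (range (\<lambda>n. \<Sum>y\<in>S. (f y n::'m))) = (\<Sum>y\<in>S. lubM (range (f y)))"
  using assms
proof (induction S rule: finite_induct)
  case empty
  then show ?case using lubM_const by simp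
next
  case (insert x F)
  then show ?case using lubM_add[of "f x"] incseqM_sum[of F f] by simp
qed

lemma lubM_eventually_const:
  assumes s: "incseqM (s::nat \<Rightarrow> 'm)" and ev: "\<And>n. n \<ge> N \<Longrightarrow> s n = c"
  shows "lubM (range s) = c"
proof (rule lubM_eqI, unfold is_lubM_def, safe)
  fix n show "leM (s n) c"
    using incseqM_leM[OF s, of n "max n N"] ev[of "max n N"] by simp
qed (use ev[of N] in auto)

lemma lubM_Suc_shift:
  assumes s: "incseqM (s::nat \<Rightarrow> 'm)"
  shows "lubM (range (\<lambda>n. s (Suc n))) = lubM (range s)"
proof (rule lubM_eqI, unfold is_lubM_def, safe)
  fix v assume "\<forall>k\<in>range (\<lambda>n. s (Suc n)). leM k v"
  then show "leM (lubM (range s)) v"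
    using lubM_incseqM_leM[OF s] s leM_trans unfolding incseqM_def by blast
qed (rule leM_lubM_incseqM[OF s])

lemma continuousM_leM:
  assumes f: "continuousM f" and ab: "leM (a::'m) b"
  shows "leM (f a) (f b)"
proof -
  have "chainM {a, b}" unfolding chainM_def using ab leM_refl by auto
  moreover have "lubM {a, b} = b"
    by (rule lubM_eqI) (auto simp: is_lubM_def ab leM_refl)
  ultimately have "is_lubM {f a, f b} (f b)" using f unfolding continuousM_def by force
  then show ?thesis unfolding is_lubM_def by blast
qed

lemma incseqM_continuousM: "continuousM f \<Longrightarrow> incseqM (s::nat \<Rightarrow> 'm) \<Longrightarrow> incseqM (\<lambda>n. f (s n))"
  using continuousM_leM unfolding incseqM_def by blast

lemma continuousM_lubM:
  assumes f: "continuousM f" and s: "incseqM (s::nat \<Rightarrow> 'm)"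
  shows "f (lubM (range s)) = lubM (range (\<lambda>n. f (s n)))"
proof -
  have "is_lubM (f ` range s) (f (lubM (range s)))"
    using f chainM_range_incseqM[OF s] unfolding continuousM_def by blast
  then show ?thesis using lubM_eqI by (simp add: image_image)
qed

lemma infsumM_split_finite:
  assumes B: "finite B" "B \<subseteq> A"
  shows "infsumM (g::nat \<Rightarrow> 'm) A = infsumM g (A - B) + sum g B"
proof -
  have split: "sum g (A \<inter> {..<n}) = sum g ((A - B) \<inter> {..<n}) + sum g (B \<inter> {..<n})" for n
  proof -
    have "A \<inter> {..<n} = ((A - B) \<inter> {..<n}) \<union> (B \<inter> {..<n})" using B by auto
    moreover have "((A - B) \<inter> {..<n}) \<inter> (B \<inter> {..<n}) = {}" by auto
    ultimately show ?thesis by (simp add: sum.union_disjoint)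
  qed
  obtain N where N: "\<forall>b\<in>B. b < N" using B(1) finite_nat_set_iff_bounded by blast
  have "lubM (range (\<lambda>n. sum g (B \<inter> {..<n}))) = sum g B"
  proof (rule lubM_eventually_const[OF incseqM_partial_sums, of N])
    fix n assume "N \<le> n"
    then have "B \<inter> {..<n} = B" using N by auto
    then show "sum g (B \<inter> {..<n}) = sum g B" by simp
  qed
  then show ?thesis
    unfolding infsumM_def split using lubM_add[OF incseqM_partial_sums incseqM_partial_sums] by simp
qed

end

lemma infsumM_cong: "(\<And>y. y \<in> A \<Longrightarrow> g y = g' y) \<Longrightarrow> infsumM g A = infsumM g' A"
  unfolding infsumM_def by (metis (no_types, lifting) IntD1 sum.cong)

section \<open>Existence of least flows\<close>

definition flow_step :: "('m::comm_monoid_add) fgraph \<Rightarrow> (nat \<Rightarrow> 'm) \<Rightarrow> nat \<Rightarrow> 'm" where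
  "flow_step h fl x = (if x \<in> nodes h then in_node h x + (\<Sum>y\<in>nodes h. edge h y x (fl y)) else 0)"

definition flow_approx :: "('m::comm_monoid_add) fgraph \<Rightarrow> nat \<Rightarrow> nat \<Rightarrow> 'm" where
  "flow_approx h n = (flow_step h ^^ n) (\<lambda>_. 0)"

lemma flow_approx_0: "flow_approx h 0 = (\<lambda>_. 0)"
  by (simp add: flow_approx_def)

lemma flow_approx_Suc: "flow_approx h (Suc n) = flow_step h (flow_approx h n)"
  by (simp add: flow_approx_def)

lemma flow_approx_outside: "x \<notin> nodes h \<Longrightarrow> flow_approx h n x = 0"
  by (cases n) (simp_all add: flow_approx_0 flow_approx_Suc flow_step_def)

lemma flow_step_fixpoint: "is_flow_sol h fl \<Longrightarrow> x \<in> nodes h \<Longrightarrow> flow_step h fl x = fl x"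
  unfolding is_flow_sol_def flow_step_def by simp

lemma is_least_flow_unique:
  assumes "flow_monoid TYPE('m::comm_monoid_add)"
    and f: "is_least_flow (h::'m fgraph) f" and g: "is_least_flow h g"
  shows "f = g"
proof
  fix x show "f x = g x"
  proof (cases "x \<in> nodes h")
    case True
    then show ?thesis
      using leM_antisym[OF assms(1)] f g unfolding is_least_flow_def by blast
  next
    case False
    then show ?thesis using f g unfolding is_least_flow_def by simp
  qed
qed

lemma flow_graph_finite_nodes: "flow_graph h \<Longrightarrow> finite (nodes h)"
  unfolding flow_graph_def by blast

lemma flow_graph_continuousM_edge: "flow_graph h \<Longrightarrow> y \<in> nodes h \<Longrightarrow> continuousM (edge h y x)"
  unfolding flow_graph_def by blast

context
  fixes h :: "('m::comm_monoid_add) fgraph"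
  assumes flow_monoid: "flow_monoid TYPE('m)" and graph: "flow_graph h"
begin

lemma flow_step_mono:
  "(\<And>y. y \<in> nodes h \<Longrightarrow> leM (f1 y) (f2 y)) \<Longrightarrow> leM (flow_step h f1 x) (flow_step h f2 x)"
  unfolding flow_step_def
  using continuousM_leM[OF flow_monoid flow_graph_continuousM_edge[OF graph]]
  by (simp add: leM_refl leM_add_mono leM_sum_mono)

lemma incseqM_flow_approx: "incseqM (\<lambda>n. flow_approx h n x)"
proof -
  have "\<forall>x. leM (flow_approx h n x) (flow_approx h (Suc n) x)" for n
  proof (induction n)
    case 0 then show ?case by (simp add: flow_approx_0 leM_zero)
  next
    case (Suc n) then show ?case by (simp add: flow_approx_Suc flow_step_mono)
  qed
  then show ?thesis unfolding incseqM_def by blast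
qed

lemma flow_approx_leM_flow_sol:
  assumes sol: "is_flow_sol h fl" and x: "x \<in> nodes h"
  shows "leM (flow_approx h n x) (fl x)"
  using x
proof (induction n arbitrary: x)
  case 0 then show ?case by (simp add: flow_approx_0 leM_zero)
next
  case (Suc n)
  have "leM (flow_step h (flow_approx h n) x) (flow_step h fl x)"
    using Suc.IH by (rule flow_step_mono)
  then show ?case by (simp add: flow_approx_Suc flow_step_fixpoint[OF sol Suc.prems])
qed

definition lub_flow_approx :: "nat \<Rightarrow> 'm" where
  "lub_flow_approx x = lubM (range (\<lambda>n. flow_approx h n x))"

lemma is_flow_sol_lub_flow_approx: "is_flow_sol h lub_flow_approx"
  unfolding is_flow_sol_def
proof
  fix x assume x: "x \<in> nodes h"
  let ?edges = "\<lambda>n. \<Sum>y\<in>nodes h. edge h y x (flow_approx h n y)"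
  have incseq_edge: "incseqM (\<lambda>n. edge h y x (flow_approx h n y))" if "y \<in> nodes h" for y
    using flow_graph_continuousM_edge[OF graph that] incseqM_flow_approx
    by (rule incseqM_continuousM[OF flow_monoid])
  have "(\<Sum>y\<in>nodes h. edge h y x (lub_flow_approx y)) = lubM (range ?edges)"
    unfolding lub_flow_approx_def
    using continuousM_lubM[OF flow_monoid flow_graph_continuousM_edge[OF graph] incseqM_flow_approx]
      lubM_sum[OF flow_monoid flow_graph_finite_nodes[OF graph] incseq_edge] by simp
  then have "in_node h x + (\<Sum>y\<in>nodes h. edge h y x (lub_flow_approx y))
      = lubM (range (\<lambda>n. in_node h x + ?edges n))"
    using add_lubM_incseqM[OF flow_monoid incseqM_sum[OF incseq_edge]] by simp
  also have "\<dots> = lubM (range (\<lambda>n. flow_approx h (Suc n) x))"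
    using x by (simp add: flow_approx_Suc flow_step_def)
  also have "\<dots> = lub_flow_approx x"
    unfolding lub_flow_approx_def by (rule lubM_Suc_shift[OF flow_monoid incseqM_flow_approx])
  finally show "lub_flow_approx x = in_node h x + (\<Sum>y\<in>nodes h. edge h y x (lub_flow_approx y))"
    by simp
qed

lemma is_least_flow_lub_flow_approx: "is_least_flow h lub_flow_approx"
  unfolding is_least_flow_def
proof (intro conjI allI impI ballI)
  fix x assume "x \<notin> nodes h"
  then show "lub_flow_approx x = 0"
    unfolding lub_flow_approx_def using lubM_const[OF flow_monoid, of 0]
    by (simp add: flow_approx_outside)
next
  fix fl x assume "is_flow_sol h fl" "x \<in> nodes h"
  then show "leM (lub_flow_approx x) (fl x)"
    unfolding lub_flow_approx_def
    by (simp add: lubM_incseqM_leM[OF flow_monoid incseqM_flow_approx] flow_approx_leM_flow_sol)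
qed (rule is_flow_sol_lub_flow_approx)

lemma is_least_flow_flow: "is_least_flow h (flow h)"
proof -
  have "flow h = lub_flow_approx"
    unfolding flow_def
    by (rule the_equality[where P = "is_least_flow h", OF is_least_flow_lub_flow_approx])
      (rule is_least_flow_unique[OF flow_monoid _ is_least_flow_lub_flow_approx])
  then show ?thesis using is_least_flow_lub_flow_approx by simp
qed

end

section \<open>Flows of a disjoint union\<close>

lemma nodes_fg_union [simp]: "nodes (h1 \<uplus>\<^sub>f h2) = nodes h1 \<union> nodes h2"
  by (simp add: fg_union_def)

lemma edge_fg_union:
  "edge (h1 \<uplus>\<^sub>f h2) y x = (if y \<in> nodes h1 then edge h1 y x else edge h2 y x)"
  by (simp add: fg_union_def)

lemma flow_graph_fg_union: "flow_graph h1 \<Longrightarrow> flow_graph h2 \<Longrightarrow> flow_graph (h1 \<uplus>\<^sub>f h2)"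
  unfolding flow_graph_def by (auto simp: edge_fg_union)

lemma in_node_fg_union_left:
  "x \<in> nodes h1 \<Longrightarrow>
    in_node (h1 \<uplus>\<^sub>f h2) x = infsumM (\<lambda>y. inflow h1 y x) (- (nodes h1 \<union> nodes h2))"
  unfolding in_node_def nodes_fg_union by (rule infsumM_cong) (auto simp: fg_union_def)

lemma in_node_fg_union_right:
  "x \<in> nodes h2 \<Longrightarrow> x \<notin> nodes h1 \<Longrightarrow>
    in_node (h1 \<uplus>\<^sub>f h2) x = infsumM (\<lambda>y. inflow h2 y x) (- (nodes h1 \<union> nodes h2))"
  unfolding in_node_def nodes_fg_union by (rule infsumM_cong) (auto simp: fg_union_def)

lemma in_node_split_finite:
  assumes "flow_monoid TYPE('m::comm_monoid_add)" "finite B" "B \<inter> nodes h = {}"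
  shows "in_node (h::'m fgraph) x =
    infsumM (\<lambda>y. inflow h y x) (- (nodes h \<union> B)) + (\<Sum>y\<in>B. inflow h y x)"
proof -
  have "- nodes h - B = - (nodes h \<union> B)" by blast
  moreover have "B \<subseteq> - nodes h" using assms(3) by blast
  ultimately show ?thesis
    unfolding in_node_def using infsumM_split_finite[OF assms(1,2)] by metis
qed

lemma flow_sol_absorb_inflow:
  assumes fm: "flow_monoid TYPE('m::comm_monoid_add)"
    and disj: "nodes h1 \<inter> nodes h2 = {}" and fin: "finite (nodes h2)"
    and sol: "is_flow_sol (h1::'m fgraph) f1" and x: "x \<in> nodes h1"
    and sends: "\<And>y. y \<in> nodes h2 \<Longrightarrow> edge h2 y x (f2 y) = inflow h1 y x"
  shows "f1 x = infsumM (\<lambda>y. inflow h1 y x) (- (nodes h1 \<union> nodes h2))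
    + ((\<Sum>y\<in>nodes h1. edge h1 y x (f1 y)) + (\<Sum>y\<in>nodes h2. edge h2 y x (f2 y)))"
proof -
  have "f1 x = in_node h1 x + (\<Sum>y\<in>nodes h1. edge h1 y x (f1 y))"
    using sol x unfolding is_flow_sol_def by blast
  moreover have "in_node h1 x = infsumM (\<lambda>y. inflow h1 y x) (- (nodes h1 \<union> nodes h2))
      + (\<Sum>y\<in>nodes h2. edge h2 y x (f2 y))"
    using in_node_split_finite[OF fm fin] disj sends by (simp add: inf_commute)
  ultimately show ?thesis by (simp add: ac_simps)
qed

lemma sum_edge_fg_union:
  assumes disj: "nodes h1 \<inter> nodes h2 = {}" and "finite (nodes h1)" "finite (nodes h2)"
  shows "(\<Sum>y\<in>nodes h1 \<union> nodes h2. edge (h1 \<uplus>\<^sub>f h2) y x (fun_union (nodes h1) f1 f2 y))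
    = (\<Sum>y\<in>nodes h1. edge h1 y x (f1 y)) + (\<Sum>y\<in>nodes h2. edge h2 y x (f2 y))"
proof -
  have "(\<Sum>y\<in>nodes h2. edge (h1 \<uplus>\<^sub>f h2) y x (fun_union (nodes h1) f1 f2 y))
      = (\<Sum>y\<in>nodes h2. edge h2 y x (f2 y))"
    by (rule sum.cong) (use disj in \<open>auto simp: edge_fg_union fun_union_def\<close>)
  then show ?thesis
    using assms by (simp add: sum.union_disjoint edge_fg_union fun_union_def)
qed

lemma is_flow_sol_fg_union:
  assumes fm: "flow_monoid TYPE('m::comm_monoid_add)"
    and disj: "nodes h1 \<inter> nodes h2 = {}"
    and fin1: "finite (nodes h1)" and fin2: "finite (nodes h2)"
    and sol1: "is_flow_sol (h1::'m fgraph) f1" and sol2: "is_flow_sol h2 f2"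
    and sends12: "\<And>x y. x \<in> nodes h1 \<Longrightarrow> y \<in> nodes h2 \<Longrightarrow> edge h1 x y (f1 x) = inflow h2 x y"
    and sends21: "\<And>x y. x \<in> nodes h1 \<Longrightarrow> y \<in> nodes h2 \<Longrightarrow> edge h2 y x (f2 y) = inflow h1 y x"
  shows "is_flow_sol (h1 \<uplus>\<^sub>f h2) (fun_union (nodes h1) f1 f2)"
  unfolding is_flow_sol_def nodes_fg_union sum_edge_fg_union[OF disj fin1 fin2]
proof
  fix x assume "x \<in> nodes h1 \<union> nodes h2"
  then consider "x \<in> nodes h1" | "x \<in> nodes h2" "x \<notin> nodes h1" by blast
  then show "fun_union (nodes h1) f1 f2 x = in_node (h1 \<uplus>\<^sub>f h2) x
      + ((\<Sum>y\<in>nodes h1. edge h1 y x (f1 y)) + (\<Sum>y\<in>nodes h2. edge h2 y x (f2 y)))"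
  proof cases
    case 1
    then have "fun_union (nodes h1) f1 f2 x = f1 x" by (simp add: fun_union_def)
    also have "\<dots> = in_node (h1 \<uplus>\<^sub>f h2) x
        + ((\<Sum>y\<in>nodes h1. edge h1 y x (f1 y)) + (\<Sum>y\<in>nodes h2. edge h2 y x (f2 y)))"
      unfolding in_node_fg_union_left[OF 1]
      by (rule flow_sol_absorb_inflow[OF fm disj fin2 sol1 1 sends21[OF 1]])
    finally show ?thesis .
  next
    case 2
    have disj': "nodes h2 \<inter> nodes h1 = {}" using disj by blast
    from 2 have "fun_union (nodes h1) f1 f2 x = f2 x" by (simp add: fun_union_def)
    also have "\<dots> = infsumM (\<lambda>y. inflow h2 y x) (- (nodes h2 \<union> nodes h1))
        + ((\<Sum>y\<in>nodes h2. edge h2 y x (f2 y)) + (\<Sum>y\<in>nodes h1. edge h1 y x (f1 y)))"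
      by (rule flow_sol_absorb_inflow[OF fm disj' fin1 sol2 2(1) sends12[OF _ 2(1)]])
    also have "\<dots> = in_node (h1 \<uplus>\<^sub>f h2) x
        + ((\<Sum>y\<in>nodes h1. edge h1 y x (f1 y)) + (\<Sum>y\<in>nodes h2. edge h2 y x (f2 y)))"
      unfolding in_node_fg_union_right[OF 2] Un_commute[of "nodes h2"]
      by (rule arg_cong[where f = "(+) _"], rule add.commute)
    finally show ?thesis .
  qed
qed

theorem mainTheorem3:
  fixes h1 h2 :: "('m::comm_monoid_add) fgraph"
  assumes "flow_monoid TYPE('m)"
    and "flow_graph h1" and "flow_graph h2"
    and "h1 ## h2"
  shows "\<forall>x\<in>nodes h1 \<union> nodes h2.
           leM (flow (h1 \<uplus>\<^sub>f h2) x) (fun_union (nodes h1) (flow h1) (flow h2) x)"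
proof -
  from assms(4) have disj: "nodes h1 \<inter> nodes h2 = {}"
    and sends: "\<And>x y. x \<in> nodes h1 \<Longrightarrow> y \<in> nodes h2 \<Longrightarrow>
      edge h1 x y (flow h1 x) = inflow h2 x y \<and> edge h2 y x (flow h2 y) = inflow h1 y x"
    unfolding compatible_def outflow_def by blast+
  have "is_flow_sol (h1 \<uplus>\<^sub>f h2) (fun_union (nodes h1) (flow h1) (flow h2))"
  proof (rule is_flow_sol_fg_union[OF assms(1) disj])
    show "finite (nodes h1)" "finite (nodes h2)"
      using assms(2,3) by (simp_all add: flow_graph_finite_nodes)
    show "is_flow_sol h1 (flow h1)" "is_flow_sol h2 (flow h2)"
      using is_least_flow_flow[OF assms(1)] assms(2,3) unfolding is_least_flow_def by blast+
  qed (simp_all add: sends)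
  moreover have "is_least_flow (h1 \<uplus>\<^sub>f h2) (flow (h1 \<uplus>\<^sub>f h2))"
    using assms(1-3) by (simp add: is_least_flow_flow flow_graph_fg_union)
  ultimately show ?thesis unfolding is_least_flow_def nodes_fg_union by simp
qed

end
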